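(* Let $T:X\rightrightarrows X^*$ be a multivalued operator and let $x\in X$. The following are equivalent: (1) $V_T(x)=\emptyset$; (2) $x\in Z_{T^\rho}$; (3) $T^\rho(x)=N_{W_T(x)}(x)$; (4) $x\in\mathrm{dom}(T^\rho)$ and $T^\rho(x)$ is weak$^*$-closed.
   Context: $X$ is a real Banach space with dual $X^*$ and pairing $\langle x,x^*\rangle=x^*(x)$. A multivalued operator $T:X\rightrightarrows X^*$ is identified with its graph $T\subset X\times X^*$; $T(x)=\{x^*:(x,x^* )\in T\}$, $\mathrm{dom}(T)=\{x:T(x)\neq\emptyset\}$, and $Z_T=\{x: 0\in T(x)\}$. $V_T(x)=\{y\in X:\exists\, y^*\in T(y),\ \langle x-y,y^*\rangle>0\}$ and $W_T(x)=\{y\in X:\exists\, y^*\in T(y),\ \langle x-y,y^*\rangle=0\}$. For $C\subset X$, $N_C(x)=\{x^*\in X^*: \langle y-x,x^*\rangle\le 0\ \forall y\in C\}$ (equal to $X^*$ if $C=\emptyset$). For $(x,x^* ),(y,y^* )\in X\times X^*$, write $(x,x^* )\sim_p(y,y^* )$ if either $\min\{\langle x-y,y^*\rangle,\langle y-x,x^*\rangle\}<0$ or $\langle x-y,y^*\rangle=\langle y-x,x^*\rangle=0$. The pseudomonotone polar of $T$ is $T^\rho=\{(x,x^* )\in X\times X^*: (x,x^* )\sim_p(y,y^* )\ \forall (y,y^* )\in T\}$. *)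

theory Defs
  imports "HOL-Analysis.Analysis"
begin

text \<open>X is a real Banach space ('a::banach); its dual X* is the space of continuous
linear functionals 'a \<Rightarrow>L real; pairing is blinfun_apply. Operators are graphs.\<close>

type_synonym 'a mop = "('a \<times> ('a \<Rightarrow>\<^sub>L real)) set"

definition pair :: "'a::real_normed_vector \<Rightarrow> ('a \<Rightarrow>\<^sub>L real) \<Rightarrow> real" where
  "pair x xs = blinfun_apply xs x"

definition opval :: "'a::real_normed_vector mop \<Rightarrow> 'a \<Rightarrow> ('a \<Rightarrow>\<^sub>L real) set" where
  "opval T x = {xs. (x, xs) \<in> T}"

definition opdom :: "'a::real_normed_vector mop \<Rightarrow> 'a set" where
  "opdom T = {x. opval T x \<noteq> {}}"

definition zeros :: "'a::real_normed_vector mop \<Rightarrow> 'a set" where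
  "zeros T = {x. 0 \<in> opval T x}"

definition V_set :: "'a::real_normed_vector mop \<Rightarrow> 'a \<Rightarrow> 'a set" where
  "V_set T x = {y. \<exists>ys \<in> opval T y. pair (x - y) ys > 0}"

definition W_set :: "'a::real_normed_vector mop \<Rightarrow> 'a \<Rightarrow> 'a set" where
  "W_set T x = {y. \<exists>ys \<in> opval T y. pair (x - y) ys = 0}"

definition normal_cone :: "'a::real_normed_vector set \<Rightarrow> 'a \<Rightarrow> ('a \<Rightarrow>\<^sub>L real) set" where
  "normal_cone C x = {xs. \<forall>y\<in>C. pair (y - x) xs \<le> 0}"

definition pm_rel :: "'a::real_normed_vector \<times> ('a \<Rightarrow>\<^sub>L real) \<Rightarrow> 'a \<times> ('a \<Rightarrow>\<^sub>L real) \<Rightarrow> bool" where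
  "pm_rel p q = (case p of (x, xs) \<Rightarrow> case q of (y, ys) \<Rightarrow>
     min (pair (x - y) ys) (pair (y - x) xs) < 0 \<or>
     (pair (x - y) ys = 0 \<and> pair (y - x) xs = 0))"

definition pm_polar :: "'a::real_normed_vector mop \<Rightarrow> 'a mop" where
  "pm_polar T = {p. \<forall>q\<in>T. pm_rel p q}"

text \<open>Weak* topology on the dual: the initial topology of the evaluation maps,
i.e. the pullback of the product (pointwise) topology on 'a \<Rightarrow> real.\<close>

definition weak_star_topology :: "('a::real_normed_vector \<Rightarrow>\<^sub>L real) topology" where
  "weak_star_topology = pullback_topology UNIV blinfun_apply euclidean"

definition weak_star_closed :: "('a::real_normed_vector \<Rightarrow>\<^sub>L real) set \<Rightarrow> bool" where
  "weak_star_closed S = closedin weak_star_topology S"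

end

theory Submission
  imports Defs
begin

text \<open>For \<open>(x, 0)\<close> and \<open>(y, y*) \<in> T\<close> the pseudomonotone relation only asks \<open>\<langle>x - y, y*\<rangle> \<le> 0\<close>; hence \<open>0 \<in> T\<^sup>\<rho>(x)\<close> says exactly that \<open>V\<^sub>T(x) = \<emptyset>\<close>.
In that case the pairs with \<open>\<langle>x - y, y*\<rangle> < 0\<close> impose nothing on x*, and those with
\<open>\<langle>x - y, y*\<rangle> = 0\<close>, i.e. \<open>y \<in> W\<^sub>T(x)\<close>, impose \<open>\<langle>y - x, x*\<rangle> \<le> 0\<close>: this is the normal cone.
Conversely, \<open>T\<^sup>\<rho>(x)\<close> is a cone without apex, so if it is nonempty and weak*-closed it contains
the weak*-limit 0 of \<open>t x*\<close> as \<open>t \<rightarrow> 0\<^sup>+\<close>.\<close>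

lemma pm_polar_iff:
  "xs \<in> opval (pm_polar T) x \<longleftrightarrow> (\<forall>(y, ys)\<in>T. pm_rel (x, xs) (y, ys))"
  by (auto simp: opval_def pm_polar_def)

lemma pair_scaleR_right: "pair z (t *\<^sub>R xs) = t * pair z xs"
  by (simp add: pair_def blinfun.scaleR_left)

lemma pm_polar_scaleR:
  assumes "xs \<in> opval (pm_polar T) x" "t > 0"
  shows "t *\<^sub>R xs \<in> opval (pm_polar T) x"
proof -
  have sign: "t * b < 0 \<longleftrightarrow> b < 0" "t * b = 0 \<longleftrightarrow> b = 0" for b :: real
    using assms(2) by (auto simp: mult_less_0_iff)
  have "pm_rel (x, t *\<^sub>R xs) (y, ys)" if "(y, ys) \<in> T" for y ys
    using assms(1) that sign
    by (auto simp: pm_polar_iff pm_rel_def pair_scaleR_right min_less_iff_disj)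
  then show ?thesis by (auto simp: pm_polar_iff)
qed

lemma zero_mem_normal_cone: "0 \<in> normal_cone C x"
  by (simp add: normal_cone_def pair_def)

lemma weak_star_closed_iff:
  "weak_star_closed S \<longleftrightarrow> (\<exists>F. closed F \<and> S = blinfun_apply -` F)"
proof -
  have "weak_star_closed S \<longleftrightarrow> (\<exists>U. open U \<and> - S = blinfun_apply -` U)"
    by (simp add: weak_star_closed_def closedin_def weak_star_topology_def
        topspace_pullback_topology openin_pullback_topology Compl_eq_Diff_UNIV)
  also have "\<dots> \<longleftrightarrow> (\<exists>F. closed F \<and> S = blinfun_apply -` F)"
    by (metis closed_open double_complement vimage_Compl)
  finally show ?thesis .
qed

lemma weak_star_closed_normal_cone: "weak_star_closed (normal_cone C x)"
proof -
  have "closed (\<Inter>y\<in>C. {f::'a \<Rightarrow> real. f (y - x) \<le> 0})"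
    by (intro closed_INT ballI closed_Collect_le) (auto intro!: continuous_intros)
  moreover have "normal_cone C x = blinfun_apply -` (\<Inter>y\<in>C. {f. f (y - x) \<le> 0})"
    by (auto simp: normal_cone_def pair_def)
  ultimately show ?thesis
    unfolding weak_star_closed_iff by blast
qed

lemma weak_star_closed_ray_imp_zero:
  assumes "weak_star_closed S" and ray: "\<And>t. t > 0 \<Longrightarrow> t *\<^sub>R xs \<in> S"
  shows "0 \<in> S"
proof -
  obtain F where F: "closed F" "S = blinfun_apply -` F"
    using assms(1) weak_star_closed_iff by blast
  define h where "h t = blinfun_apply (t *\<^sub>R xs)" for t :: real
  have "continuous_on UNIV h"
    unfolding h_def by (intro continuous_on_coordinatewise_then_product) (auto intro!: continuous_intros)
  then have "(h \<longlongrightarrow> h 0) (at_right 0)"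
    by (simp add: continuous_on_eq_continuous_at isCont_def filterlim_at_split)
  moreover have "eventually (\<lambda>t. h t \<in> F) (at_right 0)"
    using ray F(2) by (auto simp: h_def eventually_at_right_field intro: exI[of _ 1])
  ultimately have "h 0 \<in> F"
    using Lim_in_closed_set[OF F(1)] trivial_limit_at_right_real by blast
  then show ?thesis
    using F(2) by (simp add: h_def)
qed

lemma zeros_pm_polar_iff:
  "x \<in> zeros (pm_polar T) \<longleftrightarrow> (\<forall>(y, ys)\<in>T. pair (x - y) ys \<le> 0)"
  by (auto simp: zeros_def pm_polar_iff pm_rel_def pair_def min_def split: if_splits)

lemma V_set_empty_iff_zeros_pm_polar:
  "V_set T x = {} \<longleftrightarrow> x \<in> zeros (pm_polar T)"
  by (force simp: zeros_pm_polar_iff V_set_def opval_def)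

lemma pm_polar_eq_normal_cone:
  assumes "x \<in> zeros (pm_polar T)"
  shows "opval (pm_polar T) x = normal_cone (W_set T x) x"
proof (intro set_eqI iffI)
  fix xs assume xs: "xs \<in> opval (pm_polar T) x"
  show "xs \<in> normal_cone (W_set T x) x"
  proof (unfold normal_cone_def, intro CollectI ballI)
    fix y assume "y \<in> W_set T x"
    then obtain ys where "(y, ys) \<in> T" "pair (x - y) ys = 0"
      by (auto simp: W_set_def opval_def)
    with xs show "pair (y - x) xs \<le> 0"
      by (force simp: pm_polar_iff pm_rel_def min_def split: if_splits)
  qed
next
  fix xs assume xs: "xs \<in> normal_cone (W_set T x) x"
  have "pm_rel (x, xs) (y, ys)" if yT: "(y, ys) \<in> T" for y ys
  proof (cases "pair (x - y) ys = 0")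
    case True
    then have "y \<in> W_set T x" using yT by (auto simp: W_set_def opval_def)
    with xs True show ?thesis by (auto simp: normal_cone_def pm_rel_def min_def)
  next
    case False
    with assms yT have "pair (x - y) ys < 0" by (force simp: zeros_pm_polar_iff)
    then show ?thesis by (auto simp: pm_rel_def min_def)
  qed
  then show "xs \<in> opval (pm_polar T) x" by (auto simp: pm_polar_iff)
qed

theorem mainTheorem5:
  fixes T :: "('a::banach \<times> ('a \<Rightarrow>\<^sub>L real)) set" and x :: 'a
  shows "(V_set T x = {} \<longleftrightarrow> x \<in> zeros (pm_polar T))
       \<and> (x \<in> zeros (pm_polar T) \<longleftrightarrow> opval (pm_polar T) x = normal_cone (W_set T x) x)
       \<and> (opval (pm_polar T) x = normal_cone (W_set T x) x \<longleftrightarrow>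
            (x \<in> opdom (pm_polar T) \<and> weak_star_closed (opval (pm_polar T) x)))"
proof -
  let ?P = "opval (pm_polar T) x" and ?N = "normal_cone (W_set T x) x"
  have zeros_iff_eq: "x \<in> zeros (pm_polar T) \<longleftrightarrow> ?P = ?N"
    using pm_polar_eq_normal_cone zero_mem_normal_cone by (auto simp: zeros_def)
  have "?P = ?N \<longleftrightarrow> x \<in> opdom (pm_polar T) \<and> weak_star_closed ?P"
  proof
    assume "?P = ?N"
    then show "x \<in> opdom (pm_polar T) \<and> weak_star_closed ?P"
      using zero_mem_normal_cone[of "W_set T x" x] weak_star_closed_normal_cone
      by (auto simp: opdom_def)
  next
    assume dom_closed: "x \<in> opdom (pm_polar T) \<and> weak_star_closed ?P"
    then obtain xs where "xs \<in> ?P" by (auto simp: opdom_def)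
    then have "0 \<in> ?P"
      using dom_closed weak_star_closed_ray_imp_zero pm_polar_scaleR by blast
    with zeros_iff_eq show "?P = ?N" by (simp add: zeros_def)
  qed
  with zeros_iff_eq V_set_empty_iff_zeros_pm_polar show ?thesis by blast
qed

end
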